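(* Let $F$ be a positive integer, $p\ge 1$, and $n_1<n_2<\cdots<n_p<F$ positive integers with $\gcd\{n_1,\dots,n_p\}\nmid F$. Then $\{n_1,\dots,n_p\}$ is the minimal $\mathrm{Sat}(F)$-system of generators of $\mathrm{Sat}(F)[\{n_1,\dots,n_p\}]$ if and only if $\gcd\{n_1,\dots,n_i\}\neq\gcd\{n_1,\dots,n_{i+1}\}$ for all $i\in\{1,\dots,p-1\}$.
   Context: A numerical semigroup is a subset $S\subseteq\mathbb{N}$ closed under addition, containing $0$, with $\mathbb{N}\setminus S$ finite; its Frobenius number $\mathrm{F}(S)$ is the largest integer not in $S$. For $A\subseteq\mathbb{N}$ and $a\in A$, let $\mathrm{d}_A(a)=\gcd\{x\in A\mid x\le a\}$. A numerical semigroup $S$ is saturated if $s+\mathrm{d}_S(s)\in S$ for all $s\in S\setminus\{0\}$. For a positive integer $F$, $\mathrm{Sat}(F)$ denotes the set of all saturated numerical semigroups $S$ with $\mathrm{F}(S)=F$. Let $\Delta(F+1)=\{0\}\cup\{x\in\mathbb{N}\mid x\ge F+1\}$. A set $X\subseteq\mathbb{N}$ is a $\mathrm{Sat}(F)$-set if $X\cap\Delta(F+1)=\emptyset$ and there exists $S\in\mathrm{Sat}(F)$ with $X\subseteq S$. For a $\mathrm{Sat}(F)$-set $X$, $\mathrm{Sat}(F)[X]$ denotes the intersection of all elements of $\mathrm{Sat}(F)$ containing $X$ (the smallest element of $\mathrm{Sat}(F)$ containing $X$). If $S=\mathrm{Sat}(F)[X]$, $X$ is a $\mathrm{Sat}(F)$-system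 of generators of $S$; it is minimal if $S\neq\mathrm{Sat}(F)[Y]$ for every proper subset $Y\subsetneq X$. Every $S\in\mathrm{Sat}(F)$ has a unique minimal $\mathrm{Sat}(F)$-system of generators. *)

theory Defs
  imports Main
begin

definition numerical_semigroup :: "nat set \<Rightarrow> bool" where
  "numerical_semigroup S \<longleftrightarrow> 0 \<in> S \<and> (\<forall>a\<in>S. \<forall>b\<in>S. a + b \<in> S) \<and> finite (UNIV - S)"

definition is_frobenius :: "nat set \<Rightarrow> nat \<Rightarrow> bool" where
  "is_frobenius S F \<longleftrightarrow> F \<notin> S \<and> (\<forall>x. F < x \<longrightarrow> x \<in> S)"

definition dA :: "nat set \<Rightarrow> nat \<Rightarrow> nat" where
  "dA A a = Gcd {x \<in> A. x \<le> a}"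

definition saturated :: "nat set \<Rightarrow> bool" where
  "saturated S \<longleftrightarrow> numerical_semigroup S \<and> (\<forall>s \<in> S - {0}. s + dA S s \<in> S)"

definition Sat :: "nat \<Rightarrow> nat set set" where
  "Sat F = {S. saturated S \<and> is_frobenius S F}"

definition Delta :: "nat \<Rightarrow> nat set" where
  "Delta m = {0} \<union> {x. m \<le> x}"

definition SatSet :: "nat \<Rightarrow> nat set \<Rightarrow> bool" where
  "SatSet F X \<longleftrightarrow> X \<inter> Delta (F + 1) = {} \<and> (\<exists>S \<in> Sat F. X \<subseteq> S)"

definition SatHull :: "nat \<Rightarrow> nat set \<Rightarrow> nat set" where
  "SatHull F X = \<Inter> {S \<in> Sat F. X \<subseteq> S}"

definition min_Sat_system :: "nat \<Rightarrow> nat set \<Rightarrow> nat set \<Rightarrow> bool" where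
  "min_Sat_system F X S \<longleftrightarrow> SatSet F X \<and> SatHull F X = S \<and>
     (\<forall>Y. Y \<subset> X \<longrightarrow> SatHull F Y \<noteq> S)"

end

theory Submission
  imports Defs
begin

text \<open>
  Write \<open>d\<^sub>i = gcd{n\<^sub>1,\<dots>,n\<^sub>i}\<close>. If \<open>d\<^sub>i = d\<^sub>i\<^sub>+\<^sub>1\<close>, every saturated semigroup containing
  \<open>n\<^sub>1,\<dots>,n\<^sub>i\<close> has \<open>d\<^sub>S(n\<^sub>i) | d\<^sub>i | n\<^sub>i\<^sub>+\<^sub>1\<close>, and saturation then forces it to contain every
  multiple of \<open>d\<^sub>S(n\<^sub>i)\<close> above \<open>n\<^sub>i\<close>, in particular \<open>n\<^sub>i\<^sub>+\<^sub>1\<close>; so \<open>n\<^sub>i\<^sub>+\<^sub>1\<close> is redundant.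
  Conversely, for each \<open>j\<close> the set \<open>{0} \<union> (F,\<infinity>) \<union> \<Union>\<^sub>i\<^sub>\<noteq>\<^sub>j {x \<ge> n\<^sub>i. d\<^sub>i | x}\<close> is a
  saturated semigroup with Frobenius number \<open>F\<close> (because \<open>d\<^sub>p \<notdivides> F\<close>) containing all
  \<open>n\<^sub>i\<close> with \<open>i \<noteq> j\<close>; it misses \<open>n\<^sub>j\<close> exactly when \<open>d\<^sub>j\<^sub>-\<^sub>1 \<notdivides> n\<^sub>j\<close>, i.e. when
  \<open>d\<^sub>j\<^sub>-\<^sub>1 \<noteq> d\<^sub>j\<close>.
\<close>

lemma Gcd_subset_dvd: "A \<subseteq> B \<Longrightarrow> Gcd B dvd (Gcd A :: 'a :: semiring_Gcd)"
  by (meson Gcd_dvd Gcd_greatest subsetD)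

lemma strict_mono_on_atLeastAtMostI:
  fixes f :: "nat \<Rightarrow> 'a :: order"
  assumes step: "\<And>i. a \<le> i \<Longrightarrow> i < b \<Longrightarrow> f i < f (Suc i)"
  shows "strict_mono_on {a..b} f"
proof (rule strict_mono_onI)
  have "f r < f s" if "a \<le> r" "r < s" "s \<le> b" for r s
    using that
  proof (induction s)
    case (Suc s)
    show ?case
    proof (cases "r = s")
      case False
      with Suc have "f r < f s" by simp
      also have "f s < f (Suc s)" using Suc step by simp
      finally show ?thesis .
    qed (use Suc step in simp)
  qed simp
  then show "\<And>r s. r \<in> {a..b} \<Longrightarrow> s \<in> {a..b} \<Longrightarrow> r < s \<Longrightarrow> f r < f s"
    by simp
qed

lemma dA_dvd: "s \<in> S \<Longrightarrow> dA S s dvd s"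
  unfolding dA_def by (rule Gcd_dvd) simp

lemma dA_antimono: "s \<le> t \<Longrightarrow> dA S t dvd dA S s"
  unfolding dA_def by (rule Gcd_subset_dvd) auto

lemma saturated_dA_multiple_mem:
  assumes sat: "saturated S" and "s \<in> S" "0 < s" "dA S s dvd t" "s \<le> t"
  shows "t \<in> S"
  using assms(2-)
proof (induction "t - s" arbitrary: s rule: less_induct)
  case less
  show ?case
  proof (cases "s = t")
    case False
    let ?d = "dA S s"
    have "?d dvd s" using dA_dvd less.prems(1) .
    with less.prems have "0 < ?d" by (auto intro: Nat.gr0I)
    have next_mem: "s + ?d \<in> S"
      using sat less.prems unfolding saturated_def by auto
    have "s + ?d \<le> t"
      using \<open>?d dvd s\<close> less.prems False
      by (metis add.commute dvd_diff_nat dvd_imp_le le_diff_conv2 le_neq_implies_less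
          less_imp_le_nat zero_less_diff)
    moreover have "dA S (s + ?d) dvd t"
      using dA_antimono[of s "s + ?d" S] less.prems dvd_trans by auto
    ultimately show ?thesis
      using less.hyps[of "s + ?d"] next_mem \<open>0 < ?d\<close> by simp
  qed (use less.prems in simp)
qed

lemma saturated_Gcd_multiple_mem:
  assumes "saturated S" and "A \<subseteq> S" and "a \<in> A" "0 < a" and "\<And>x. x \<in> A \<Longrightarrow> x \<le> a"
    and "Gcd A dvd t" "a \<le> t"
  shows "t \<in> S"
proof -
  have "dA S a dvd Gcd A"
    unfolding dA_def using assms(2,5) by (intro Gcd_subset_dvd) auto
  with assms show ?thesis
    by (intro saturated_dA_multiple_mem[of S a t]) (auto intro: dvd_trans)
qed

definition staircase :: "nat \<Rightarrow> nat set \<Rightarrow> (nat \<Rightarrow> nat) \<Rightarrow> (nat \<Rightarrow> nat) \<Rightarrow> nat set" where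
  "staircase F I n d = {0} \<union> {x. F < x} \<union> {x. \<exists>i\<in>I. n i \<le> x \<and> d i dvd x}"

context
  fixes d :: "nat \<Rightarrow> nat"
  assumes dvd_antitone: "\<And>i k. i \<le> k \<Longrightarrow> d k dvd d i"
begin

lemma numerical_semigroup_staircase: "numerical_semigroup (staircase F I n d)"
  unfolding numerical_semigroup_def
proof (intro conjI ballI)
  show "finite (UNIV - staircase F I n d)"
    by (rule finite_subset[of _ "{..F}"]) (auto simp: staircase_def)
next
  fix a b assume a: "a \<in> staircase F I n d" and b: "b \<in> staircase F I n d"
  show "a + b \<in> staircase F I n d"
  proof (cases "a = 0 \<or> b = 0 \<or> F < a \<or> F < b")
    case False
    then obtain i k where i: "i \<in> I" "n i \<le> a" "d i dvd a"
      and k: "k \<in> I" "n k \<le> b" "d k dvd b"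
      using a b by (auto simp: staircase_def)
    \<comment> \<open>the step with the larger index divides both summands\<close>
    have "d k dvd a + b \<and> n k \<le> a + b \<or> d i dvd a + b \<and> n i \<le> a + b"
      using i k dvd_antitone[of i k] dvd_antitone[of k i] nat_le_linear[of i k]
      by (auto intro: dvd_trans)
    then show ?thesis using i k unfolding staircase_def by blast
  qed (use a b in \<open>auto simp: staircase_def\<close>)
qed (simp add: staircase_def)

lemma saturated_staircase:
  assumes "finite I"
  shows "saturated (staircase F I n d)"
  unfolding saturated_def
proof (intro conjI ballI numerical_semigroup_staircase)
  let ?S = "staircase F I n d"
  fix s assume s: "s \<in> ?S - {0}"
  show "s + dA ?S s \<in> ?S"
  proof (cases "F < s")
    case False
    let ?J = "{i \<in> I. n i \<le> s}"
    define m where "m = Max ?J"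
    have "?J \<noteq> {}" using s False by (auto simp: staircase_def)
    then have m: "m \<in> I" "n m \<le> s" and m_max: "\<And>k. k \<in> ?J \<Longrightarrow> k \<le> m"
      using \<open>finite I\<close> Max_in[of ?J] unfolding m_def by auto
    have below_s: "d m dvd y" if y: "y \<in> ?S" "y \<le> s" for y
    proof (cases "y = 0")
      case False
      moreover have "\<not> F < y" using y \<open>\<not> F < s\<close> by simp
      ultimately obtain k where "k \<in> I" "n k \<le> y" "d k dvd y"
        using y(1) unfolding staircase_def by blast
      moreover have "k \<le> m" using m_max calculation y by auto
      ultimately show ?thesis using dvd_antitone dvd_trans by blast
    qed simp
    have "d m dvd dA ?S s"
      unfolding dA_def using below_s by (simp add: dvd_Gcd_iff)
    moreover have "d m dvd s" using below_s s by simp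
    ultimately show ?thesis using m unfolding staircase_def by force
  qed (simp add: staircase_def)
qed

lemma staircase_in_Sat:
  assumes "0 < F" and "finite I" and "\<And>i. i \<in> I \<Longrightarrow> \<not> d i dvd F"
  shows "staircase F I n d \<in> Sat F"
proof -
  have "is_frobenius (staircase F I n d) F"
    using assms(1,3) unfolding is_frobenius_def staircase_def by auto
  then show ?thesis
    using saturated_staircase[OF assms(2)] unfolding Sat_def by simp
qed

end

lemma SatHull_remove_redundant:
  assumes "\<And>S. S \<in> Sat F \<Longrightarrow> X - {x} \<subseteq> S \<Longrightarrow> x \<in> S"
  shows "SatHull F (X - {x}) = SatHull F X"
proof -
  have "{S \<in> Sat F. X - {x} \<subseteq> S} = {S \<in> Sat F. X \<subseteq> S}"
    using assms by blast
  then show ?thesis unfolding SatHull_def by simp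
qed

lemma min_Sat_systemI:
  assumes "SatSet F X"
    and separating: "\<And>x. x \<in> X \<Longrightarrow> \<exists>S \<in> Sat F. X - {x} \<subseteq> S \<and> x \<notin> S"
  shows "min_Sat_system F X (SatHull F X)"
  unfolding min_Sat_system_def
proof (intro conjI allI impI refl \<open>SatSet F X\<close>)
  fix Y assume "Y \<subset> X"
  then obtain x where x: "x \<in> X" "x \<notin> Y" by blast
  with separating obtain S where S: "S \<in> Sat F" "X - {x} \<subseteq> S" "x \<notin> S" by blast
  have "SatHull F Y \<subseteq> S"
    unfolding SatHull_def using S \<open>Y \<subset> X\<close> x by blast
  moreover have "x \<in> SatHull F X" unfolding SatHull_def using x by blast
  ultimately show "SatHull F Y \<noteq> SatHull F X" using S by blast
qed

lemma Gcd_prefix_antitone: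
  fixes n :: "nat \<Rightarrow> nat"
  shows "i \<le> k \<Longrightarrow> Gcd (n ` {1..k}) dvd (Gcd (n ` {1..i}) :: nat)"
  by (intro Gcd_subset_dvd image_mono) auto

lemma Gcd_prefix_Suc_eq:
  fixes n :: "nat \<Rightarrow> nat"
  assumes "Gcd (n ` {1..k}) dvd (n (Suc k) :: nat)"
  shows "Gcd (n ` {1..Suc k}) = Gcd (n ` {1..k})"
proof -
  have "{1..Suc k} = insert (Suc k) {1..k}" by auto
  then show ?thesis using assms by (simp add: gcd_nat.absorb2)
qed

lemma saturated_mem_next_generator:
  fixes n :: "nat \<Rightarrow> nat"
  assumes mono: "strict_mono_on {1..p} n" and "0 < n 1"
    and i: "i \<in> {1..<p}" and eq: "Gcd (n ` {1..i}) = Gcd (n ` {1..Suc i})"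
    and "saturated S" and S: "n ` {1..p} - {n (Suc i)} \<subseteq> S"
  shows "n (Suc i) \<in> S"
proof (rule saturated_Gcd_multiple_mem[of S "n ` {1..i}" "n i"])
  have less_next: "k \<in> {1..i} \<Longrightarrow> n k < n (Suc i)" for k
    using i strict_mono_onD[OF mono] by auto
  then show "n ` {1..i} \<subseteq> S" using S i by force
  show "\<And>x. x \<in> n ` {1..i} \<Longrightarrow> x \<le> n i"
    using i strict_mono_on_less_eq[OF mono] by auto
  show "0 < n i"
    using i \<open>0 < n 1\<close> strict_mono_on_less_eq[OF mono, of 1 i] by auto
  have "Gcd (n ` {1..Suc i}) dvd n (Suc i)" by (rule Gcd_dvd) simp
  then show "Gcd (n ` {1..i}) dvd n (Suc i)" using eq by simp
  show "n i \<le> n (Suc i)" using less_next[of i] i by simp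
qed (use i \<open>saturated S\<close> in auto)

lemma image_subset_staircase:
  fixes n :: "nat \<Rightarrow> nat"
  assumes "\<And>i. i \<in> I \<Longrightarrow> 1 \<le> i"
  shows "n ` I \<subseteq> staircase F I n (\<lambda>i. Gcd (n ` {1..i}))"
proof
  fix x assume "x \<in> n ` I"
  then obtain i where i: "i \<in> I" "x = n i" by blast
  then have "Gcd (n ` {1..i}) dvd n i" using assms by (intro Gcd_dvd) simp
  with i show "x \<in> staircase F I n (\<lambda>i. Gcd (n ` {1..i}))"
    unfolding staircase_def by blast
qed

lemma generator_notin_staircase:
  fixes n :: "nat \<Rightarrow> nat"
  assumes mono: "strict_mono_on {1..p} n"
    and chain: "\<forall>i \<in> {1..<p}. Gcd (n ` {1..i}) \<noteq> Gcd (n ` {1..Suc i})"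
    and j: "j \<in> {1..p}" and "0 < n j" "n j \<le> F"
  shows "n j \<notin> staircase F ({1..p} - {j}) n (\<lambda>i. Gcd (n ` {1..i}))"
proof
  assume "n j \<in> staircase F ({1..p} - {j}) n (\<lambda>i. Gcd (n ` {1..i}))"
  then have "\<exists>i \<in> {1..p} - {j}. n i \<le> n j \<and> Gcd (n ` {1..i}) dvd n j"
    using assms(4,5) unfolding staircase_def by auto
  then obtain i where i: "i \<in> {1..p}" "i \<noteq> j" "n i \<le> n j" "Gcd (n ` {1..i}) dvd n j"
    by blast
  then have "i < j" using j strict_mono_on_less_eq[OF mono] by fastforce
  then obtain k where k: "j = Suc k" "i \<le> k" by (metis less_Suc_eq_le less_imp_Suc_add)
  then have "Gcd (n ` {1..k}) dvd n (Suc k)"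
    using i Gcd_prefix_antitone[of i k n] dvd_trans by fastforce
  then have "Gcd (n ` {1..Suc k}) = Gcd (n ` {1..k})"
    by (rule Gcd_prefix_Suc_eq)
  moreover have "k \<in> {1..<p}" using k i j by auto
  ultimately show False using chain by metis
qed

lemma min_Sat_system_imp_Gcd_prefix_strict:
  fixes n :: "nat \<Rightarrow> nat"
  assumes mono: "strict_mono_on {1..p} n" and "0 < n 1"
    and min: "min_Sat_system F (n ` {1..p}) (SatHull F (n ` {1..p}))"
  shows "\<forall>i \<in> {1..<p}. Gcd (n ` {1..i}) \<noteq> Gcd (n ` {1..Suc i})"
proof (intro ballI notI)
  fix i assume i: "i \<in> {1..<p}" and eq: "Gcd (n ` {1..i}) = Gcd (n ` {1..Suc i})"
  let ?X = "n ` {1..p}"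
  have "SatHull F (?X - {n (Suc i)}) = SatHull F ?X"
    using saturated_mem_next_generator[OF mono \<open>0 < n 1\<close> i eq]
    by (intro SatHull_remove_redundant) (auto simp: Sat_def)
  moreover have "?X - {n (Suc i)} \<subset> ?X" using i by auto
  ultimately show False using min unfolding min_Sat_system_def by blast
qed

lemma Gcd_prefix_strict_imp_min_Sat_system:
  fixes n :: "nat \<Rightarrow> nat"
  assumes mono: "strict_mono_on {1..p} n" and "0 < F" "0 < n 1" "n p < F"
    and "\<not> Gcd (n ` {1..p}) dvd F"
    and chain: "\<forall>i \<in> {1..<p}. Gcd (n ` {1..i}) \<noteq> Gcd (n ` {1..Suc i})"
  shows "min_Sat_system F (n ` {1..p}) (SatHull F (n ` {1..p}))"
proof (rule min_Sat_systemI)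
  let ?X = "n ` {1..p}" and ?d = "\<lambda>i. Gcd (n ` {1..i})"
  have bounds: "0 < n i \<and> n i < F" if "i \<in> {1..p}" for i
    using that assms(3,4) strict_mono_on_less_eq[OF mono, of 1 i]
      strict_mono_on_less_eq[OF mono, of i p] by auto
  have "\<not> ?d i dvd F" if "i \<in> {1..p}" for i
    using that assms(5) Gcd_prefix_antitone[of i p n] by (meson atLeastAtMost_iff dvd_trans)
  then have staircase_Sat: "staircase F I n ?d \<in> Sat F" if "I \<subseteq> {1..p}" for I
    using that \<open>0 < F\<close>
    by (intro staircase_in_Sat Gcd_prefix_antitone) (auto intro: finite_subset)
  have "?X \<inter> Delta (F + 1) = {}"
    unfolding Delta_def using bounds by fastforce
  then show "SatSet F ?X"
    unfolding SatSet_def using staircase_Sat[of "{1..p}"] image_subset_staircase[of "{1..p}" n F]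
    by auto
  fix x assume "x \<in> ?X"
  then obtain j where j: "j \<in> {1..p}" "x = n j" by blast
  show "\<exists>S \<in> Sat F. ?X - {x} \<subseteq> S \<and> x \<notin> S"
  proof (intro bexI conjI)
    show "?X - {x} \<subseteq> staircase F ({1..p} - {j}) n ?d"
      using j image_diff_subset[of n "{1..p}" "{j}"] image_subset_staircase[of "{1..p} - {j}" n F]
      by auto
    show "x \<notin> staircase F ({1..p} - {j}) n ?d"
      using generator_notin_staircase[OF mono chain j(1)] bounds[OF j(1)] j(2) by simp
  qed (rule staircase_Sat, auto)
qed

theorem proposition44:
  fixes F p :: nat and n :: "nat \<Rightarrow> nat"
  assumes "0 < F" and "1 \<le> p"
    and "0 < n 1"
    and "\<And>i. 1 \<le> i \<Longrightarrow> i < p \<Longrightarrow> n i < n (Suc i)"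
    and "n p < F"
    and "\<not> Gcd (n ` {1..p}) dvd F"
  shows "min_Sat_system F (n ` {1..p}) (SatHull F (n ` {1..p})) \<longleftrightarrow>
         (\<forall>i \<in> {1..<p}. Gcd (n ` {1..i}) \<noteq> Gcd (n ` {1..Suc i}))"
proof -
  have mono: "strict_mono_on {1..p} n"
    using assms(4) by (rule strict_mono_on_atLeastAtMostI)
  show ?thesis
    using min_Sat_system_imp_Gcd_prefix_strict[OF mono assms(3)]
      Gcd_prefix_strict_imp_min_Sat_system[OF mono assms(1,3,5,6)]
    by blast
qed

end
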